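(* Let $n,s$ be integers with $s \geq n > 0$. Let $Z_1^s,\dots,Z_n^s$ be independent random variables, each geometrically distributed with parameter $1/s$ on $\{1,2,3,\dots\}$ (i.e. $\mathbb{P}(Z_i^s=m)=(1-1/s)^{m-1}(1/s)$ for $m\ge 1$), and let $Y_n^s = \max_{1\le i\leq n} Z_i^s$. Then (1) if $n$ is even, $\mathbb{E}(Y_n^{s}) \leq \frac{n}{2}\cdot \frac{3s^2-2s}{2s-1}$; (2) if $n$ is odd, $\mathbb{E}(Y_n^{s}) \leq \frac{n}{2}\cdot \frac{3s^2-2s}{2s-1} + s$. *)

theory Defs
  imports "HOL-Probability.Probability"
begin

end

theory Submission
  imports Defs
begin

text \<open>Pair the variables as (Z 1, Z 2), (Z 3, Z 4), ...: the maximum of all of them is at most the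
  sum of the pairwise maxima, plus Z n when n is odd. With q = 1 - 1/s one has
  P(Z i > m) = q^m, so by independence P(max (Z a) (Z b) > m) = 2 q^m - q^(2m); summing these tails
  gives E(max (Z a) (Z b)) = 2/(1 - q) - 1/(1 - q^2) = (3 s^2 - 2 s)/(2 s - 1), while E(Z n) = s.\<close>

lemma (in prob_space) indep_var_of_indep_vars:
  assumes indep: "indep_vars M' X I" and "a \<in> I" "b \<in> I" "a \<noteq> b"
  shows "indep_var (M' a) (X a) (M' b) (X b)"
proof -
  have "indep_var (M' a) ((\<lambda>f. f a) \<circ> (\<lambda>\<omega>. restrict (\<lambda>i. X i \<omega>) {a}))
                  (M' b) ((\<lambda>f. f b) \<circ> (\<lambda>\<omega>. restrict (\<lambda>i. X i \<omega>) {b}))"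
    using assms by (intro indep_var_compose[OF indep_var_restrict[OF indep]]) auto
  then show ?thesis
    by (simp add: comp_def)
qed

lemma (in prob_space) nn_integral_of_nat_eq_tail_sum:
  fixes X :: "'a \<Rightarrow> nat"
  assumes X: "X \<in> measurable M (count_space UNIV)"
    and tail: "\<And>m. prob {\<omega> \<in> space M. m < X \<omega>} = t m"
    and sums: "t sums S"
  shows "(\<integral>\<^sup>+\<omega>. of_nat (X \<omega>) \<partial>M) = ennreal S"
proof -
  have t_nonneg: "0 \<le> t m" for m
    using tail[of m] measure_nonneg by metis
  moreover have "0 \<le> S"
    using sums t_nonneg by (metis sums_iff suminf_nonneg)
  ultimately have "(\<lambda>m. ennreal (t m)) sums ennreal S"
    using sums by simp
  then show ?thesis
    using X tail[symmetric] by (simp add: nn_integral_nat_function emeasure_eq_measure sums_iff)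
qed

lemma (in prob_space) geometric_tail_prob:
  fixes X :: "'a \<Rightarrow> nat" and p :: real
  assumes X: "X \<in> measurable M (count_space UNIV)" and p: "0 < p" "p \<le> 1"
    and pmf: "\<And>m. 1 \<le> m \<Longrightarrow> prob {\<omega> \<in> space M. X \<omega> = m} = (1 - p) ^ (m - 1) * p"
  shows "prob {\<omega> \<in> space M. m < X \<omega>} = (1 - p) ^ m"
proof -
  let ?A = "\<lambda>k. {\<omega> \<in> space M. X \<omega> = Suc (m + k)}"
  have "(\<lambda>k. prob (?A k)) sums prob (\<Union>k. ?A k)"
    using X by (intro finite_measure_UNION) (auto simp: disjoint_family_on_def)
  also have "(\<Union>k. ?A k) = {\<omega> \<in> space M. m < X \<omega>}"
    by (auto simp: less_iff_Suc_add)
  finally have "(\<lambda>k. (1 - p) ^ m * p * (1 - p) ^ k) sums prob {\<omega> \<in> space M. m < X \<omega>}"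
    using pmf by (simp add: power_add mult_ac)
  moreover have "(\<lambda>k. (1 - p) ^ m * p * (1 - p) ^ k) sums ((1 - p) ^ m * p * (1 / (1 - (1 - p))))"
    using p by (intro sums_mult geometric_sums) auto
  ultimately show ?thesis
    using p by (simp add: sums_unique2)
qed

lemma (in prob_space) nn_integral_geometric:
  fixes X :: "'a \<Rightarrow> nat" and p :: real
  assumes X: "X \<in> measurable M (count_space UNIV)" and p: "0 < p" "p \<le> 1"
    and tail: "\<And>m. prob {\<omega> \<in> space M. m < X \<omega>} = (1 - p) ^ m"
  shows "(\<integral>\<^sup>+\<omega>. of_nat (X \<omega>) \<partial>M) = ennreal (1 / p)"
proof (rule nn_integral_of_nat_eq_tail_sum[OF X tail])
  show "(\<lambda>m. (1 - p) ^ m) sums (1 / p)"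
    using p geometric_sums[of "1 - p"] by simp
qed

lemma (in prob_space) nn_integral_max_indep_geometric:
  fixes X Y :: "'a \<Rightarrow> nat" and p :: real
  assumes indep: "indep_var (count_space UNIV) X (count_space UNIV) Y" and p: "0 < p" "p \<le> 1"
    and tailX: "\<And>m. prob {\<omega> \<in> space M. m < X \<omega>} = (1 - p) ^ m"
    and tailY: "\<And>m. prob {\<omega> \<in> space M. m < Y \<omega>} = (1 - p) ^ m"
  shows "(\<integral>\<^sup>+\<omega>. of_nat (max (X \<omega>) (Y \<omega>)) \<partial>M) = ennreal ((3 - 2 * p) / (p * (2 - p)))"
proof -
  let ?q = "1 - p"
  have X: "X \<in> measurable M (count_space UNIV)" and Y: "Y \<in> measurable M (count_space UNIV)"
    using indep by (auto dest: indep_var_rv1 indep_var_rv2)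
  have tail_max: "prob {\<omega> \<in> space M. m < max (X \<omega>) (Y \<omega>)} = 2 * ?q ^ m - (?q ^ 2) ^ m" for m
  proof -
    let ?A = "{\<omega> \<in> space M. m < X \<omega>}" and ?B = "{\<omega> \<in> space M. m < Y \<omega>}"
    have "prob (?A \<inter> ?B) = prob ?A * prob ?B"
      using indep_varD[OF indep, of "{m<..}" "{m<..}"] by (simp add: vimage_def Int_def conj_ac)
    moreover have "{\<omega> \<in> space M. m < max (X \<omega>) (Y \<omega>)} = ?A \<union> ?B"
      by auto
    moreover have "prob (?A \<union> ?B) = prob ?A + prob ?B - prob (?A \<inter> ?B)"
      using X Y by (intro measure_Un3) (auto simp: fmeasurable_eq_sets)
    ultimately show ?thesis
      by (simp add: tailX tailY power2_eq_square power_mult_distrib)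
  qed
  have "?q ^ 2 < 1"
    using p by (simp add: power_less_one_iff abs_if)
  then have "(\<lambda>m. 2 * ?q ^ m - (?q ^ 2) ^ m) sums (2 * (1 / (1 - ?q)) - 1 / (1 - ?q ^ 2))"
    using p by (intro sums_diff sums_mult geometric_sums) auto
  also have "2 * (1 / (1 - ?q)) - 1 / (1 - ?q ^ 2) = (3 - 2 * p) / (p * (2 - p))"
    using p by (simp add: field_simps power2_eq_square)
  finally show ?thesis
    using X Y by (intro nn_integral_of_nat_eq_tail_sum[OF _ tail_max]) measurable
qed

lemma Max_le_sum_max_pairs:
  fixes f :: "nat \<Rightarrow> 'a :: {linorder, canonically_ordered_monoid_add}"
  assumes "0 < n"
  shows "Max (f ` {1..n}) \<le> (\<Sum>j<n div 2. max (f (2 * j + 1)) (f (2 * j + 2))) + (if odd n then f n else 0)"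
proof (rule Max.boundedI)
  fix y assume "y \<in> f ` {1..n}"
  then obtain i where i: "i \<in> {1..n}" "y = f i"
    by auto
  let ?pairs = "\<Sum>j<n div 2. max (f (2 * j + 1)) (f (2 * j + 2))"
  show "y \<le> ?pairs + (if odd n then f n else 0)"
  proof (cases "i \<le> 2 * (n div 2)")
    case True
    define j where "j = (i - 1) div 2"
    have "j < n div 2" "i = 2 * j + 1 \<or> i = 2 * j + 2"
      using True i(1) by (auto simp: j_def)
    then have "f i \<le> max (f (2 * j + 1)) (f (2 * j + 2))"
      by auto
    also have "\<dots> = (\<Sum>j\<in>{j}. max (f (2 * j + 1)) (f (2 * j + 2)))"
      by simp
    also have "\<dots> \<le> ?pairs"
      using \<open>j < n div 2\<close> by (intro sum_mono2) auto
    finally have "f i \<le> ?pairs" .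
    then show ?thesis
      using i(2) by (simp add: add_increasing2)
  next
    case False
    then have "i = n" "odd n"
      using i(1) by auto
    then show ?thesis
      using i(2) by (simp add: add_increasing)
  qed
qed (use assms in auto)

lemma (in prob_space) nn_integral_Max_le_pairs:
  fixes Z :: "nat \<Rightarrow> 'a \<Rightarrow> nat"
  assumes "0 < n" and rv: "\<And>i. i \<in> {1..n} \<Longrightarrow> Z i \<in> measurable M (count_space UNIV)"
  shows "(\<integral>\<^sup>+\<omega>. of_nat (Max ((\<lambda>i. Z i \<omega>) ` {1..n})) \<partial>M)
    \<le> (\<Sum>j<n div 2. \<integral>\<^sup>+\<omega>. of_nat (max (Z (2 * j + 1) \<omega>) (Z (2 * j + 2) \<omega>)) \<partial>M)
       + (if odd n then \<integral>\<^sup>+\<omega>. of_nat (Z n \<omega>) \<partial>M else 0)"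
proof -
  let ?pair = "\<lambda>j \<omega>. of_nat (max (Z (2 * j + 1) \<omega>) (Z (2 * j + 2) \<omega>)) :: ennreal"
  let ?last = "\<lambda>\<omega>. of_nat (Z n \<omega>) :: ennreal"
  have meas_pair: "?pair j \<in> borel_measurable M" if "j < n div 2" for j
  proof -
    have "2 * j + 1 \<in> {1..n}" "2 * j + 2 \<in> {1..n}"
      using that by auto
    then show ?thesis
      using rv by measurable
  qed
  have "Z n \<in> measurable M (count_space UNIV)"
    using rv \<open>0 < n\<close> by simp
  then have meas_last: "?last \<in> borel_measurable M"
    by measurable
  have "of_nat (Max ((\<lambda>i. Z i \<omega>) ` {1..n})) \<le> (\<Sum>j<n div 2. ?pair j \<omega>) + (if odd n then ?last \<omega> else 0)"
    for \<omega>
  proof -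
    have "(of_nat (Max ((\<lambda>i. Z i \<omega>) ` {1..n})) :: ennreal)
      \<le> of_nat ((\<Sum>j<n div 2. max (Z (2 * j + 1) \<omega>) (Z (2 * j + 2) \<omega>)) + (if odd n then Z n \<omega> else 0))"
      using Max_le_sum_max_pairs[OF \<open>0 < n\<close>] by (rule of_nat_mono)
    then show ?thesis
      by (cases "odd n") simp_all
  qed
  then have "(\<integral>\<^sup>+\<omega>. of_nat (Max ((\<lambda>i. Z i \<omega>) ` {1..n})) \<partial>M)
      \<le> (\<integral>\<^sup>+\<omega>. (\<Sum>j<n div 2. ?pair j \<omega>) + (if odd n then ?last \<omega> else 0) \<partial>M)"
    by (intro nn_integral_mono)
  also have "\<dots> = (\<integral>\<^sup>+\<omega>. (\<Sum>j<n div 2. ?pair j \<omega>) \<partial>M) + (if odd n then integral\<^sup>N M ?last else 0)"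
    using meas_pair meas_last by (cases "odd n") (simp_all add: nn_integral_add)
  also have "(\<integral>\<^sup>+\<omega>. (\<Sum>j<n div 2. ?pair j \<omega>) \<partial>M) = (\<Sum>j<n div 2. integral\<^sup>N M (?pair j))"
    using meas_pair by (intro nn_integral_sum) auto
  finally show ?thesis .
qed

lemma (in prob_space) nn_integral_Max_indep_geometric_le:
  fixes Z :: "nat \<Rightarrow> 'a \<Rightarrow> nat" and p :: real
  assumes "0 < n" and p: "0 < p" "p \<le> 1"
    and indep: "indep_vars (\<lambda>_. count_space UNIV) Z {1..n}"
    and tail: "\<And>i m. i \<in> {1..n} \<Longrightarrow> prob {\<omega> \<in> space M. m < Z i \<omega>} = (1 - p) ^ m"
  shows "(\<integral>\<^sup>+\<omega>. of_nat (Max ((\<lambda>i. Z i \<omega>) ` {1..n})) \<partial>M)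
    \<le> ennreal (real (n div 2) * ((3 - 2 * p) / (p * (2 - p))) + (if odd n then 1 / p else 0))"
proof -
  let ?C = "(3 - 2 * p) / (p * (2 - p))"
  have C_nonneg: "0 \<le> ?C"
    using p by simp
  have rv: "Z i \<in> measurable M (count_space UNIV)" if "i \<in> {1..n}" for i
    using indep that by (auto simp: indep_vars_def)
  have E_pair: "(\<integral>\<^sup>+\<omega>. of_nat (max (Z (2 * j + 1) \<omega>) (Z (2 * j + 2) \<omega>)) \<partial>M) = ennreal ?C"
    if "j < n div 2" for j
    using nn_integral_max_indep_geometric[OF indep_var_of_indep_vars[OF indep] p tail tail] that
    by simp
  have E_last: "(\<integral>\<^sup>+\<omega>. of_nat (Z n \<omega>) \<partial>M) = ennreal (1 / p)"
    using nn_integral_geometric[OF rv p tail, of n] \<open>0 < n\<close> by simp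
  have "(\<integral>\<^sup>+\<omega>. of_nat (Max ((\<lambda>i. Z i \<omega>) ` {1..n})) \<partial>M)
      \<le> (\<Sum>j<n div 2. \<integral>\<^sup>+\<omega>. of_nat (max (Z (2 * j + 1) \<omega>) (Z (2 * j + 2) \<omega>)) \<partial>M)
         + (if odd n then \<integral>\<^sup>+\<omega>. of_nat (Z n \<omega>) \<partial>M else 0)"
    using rv by (rule nn_integral_Max_le_pairs[OF \<open>0 < n\<close>])
  also have "\<dots> = (\<Sum>j<n div 2. ennreal ?C) + (if odd n then ennreal (1 / p) else 0)"
    by (subst sum.cong[OF refl E_pair]) (simp_all add: E_last)
  also have "\<dots> = ennreal (real (n div 2) * ?C + (if odd n then 1 / p else 0))"
    using C_nonneg p by (simp add: ennreal_mult[symmetric] ennreal_of_nat_eq_real_of_nat ennreal_plus)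
  finally show ?thesis .
qed

theorem proposition5p1:
  fixes M :: "'a measure" and Z :: "nat \<Rightarrow> 'a \<Rightarrow> nat" and n s :: nat
  assumes "prob_space M"
    and "0 < n" and "n \<le> s"
    and indep: "prob_space.indep_vars M (\<lambda>_. count_space UNIV) Z {1..n}"
    and geom: "\<And>i m. i \<in> {1..n} \<Longrightarrow> m \<ge> 1 \<Longrightarrow>
       measure M {\<omega> \<in> space M. Z i \<omega> = m} = (1 - 1 / real s) ^ (m - 1) * (1 / real s)"
  defines "Y \<equiv> (\<lambda>\<omega>. Max ((\<lambda>i. Z i \<omega>) ` {1..n}))"
  shows "(even n \<longrightarrow> prob_space.expectation M (\<lambda>\<omega>. real (Y \<omega>))
            \<le> real n / 2 * ((3 * real s ^ 2 - 2 * real s) / (2 * real s - 1)))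
       \<and> (odd n \<longrightarrow> prob_space.expectation M (\<lambda>\<omega>. real (Y \<omega>))
            \<le> real n / 2 * ((3 * real s ^ 2 - 2 * real s) / (2 * real s - 1)) + real s)"
proof -
  interpret prob_space M by fact
  define p where "p = 1 / real s"
  define C where "C = (3 * real s ^ 2 - 2 * real s) / (2 * real s - 1)"
  have s_ge_1: "1 \<le> real s"
    using assms(2,3) by simp
  have p: "0 < p" "p \<le> 1"
    using s_ge_1 by (auto simp: p_def)
  have C_nonneg: "0 \<le> C"
    using s_ge_1 by (auto simp: C_def power2_eq_square intro!: divide_nonneg_pos)
  have C_eq: "(3 - 2 * p) / (p * (2 - p)) = C"
    using s_ge_1 by (simp add: p_def C_def field_simps power2_eq_square)
  have tail: "prob {\<omega> \<in> space M. m < Z i \<omega>} = (1 - p) ^ m" if "i \<in> {1..n}" for i m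
  proof (rule geometric_tail_prob[OF _ p])
    show "Z i \<in> measurable M (count_space UNIV)"
      using indep that by (auto simp: indep_vars_def)
  qed (use geom[OF that] in \<open>simp add: p_def\<close>)
  have inv_p: "1 / p = real s"
    by (simp add: p_def)
  have "(\<integral>\<^sup>+\<omega>. of_nat (Y \<omega>) \<partial>M) \<le> ennreal (real (n div 2) * C + (if odd n then real s else 0))"
    using nn_integral_Max_indep_geometric_le[OF \<open>0 < n\<close> p indep tail]
    by (simp only: Y_def C_eq inv_p)
  then have "expectation (\<lambda>\<omega>. real (Y \<omega>)) \<le> real (n div 2) * C + (if odd n then real s else 0)"
    using C_nonneg by (intro integral_real_bounded) (auto simp: ennreal_of_nat_eq_real_of_nat)
  moreover have "real (n div 2) \<le> real n / 2" "even n \<Longrightarrow> real (n div 2) = real n / 2"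
    by auto
  ultimately show ?thesis
    using mult_right_mono[OF _ C_nonneg] unfolding C_def[symmetric] by fastforce
qed

end
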